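(* In the Truthful Interval Covering setting with $n$ agents and unit-length intervals, every randomized mechanism that is a convex combination of $k$-th ordered statistic mechanisms has approximation ratio at least $3/2$, i.e., $\sup_{\mathcal{I}} \mathbb{E}[\mathrm{SC}(\mathcal{M}(\mathcal{I}))]/\min_C\mathrm{SC}(C)\ge 3/2$.
   Context: There are $n$ agents; agent $i$ has an interval $I_i=[s_i,s_i+1]$ of length $1$; an instance is $\mathcal{I}=(I_1,\dots,I_n)$. A unit covering interval $C$ is placed; $\mathrm{cost}_i(C)=1-|I_i\cap C|$ ($|\cdot|$ = length), $\mathrm{SC}(C)=\sum_i\mathrm{cost}_i(C)$, minimum over all unit intervals $C$. The $k$-th ordered statistic mechanism places $C$ at $[s_{(k)},s_{(k)}+1]$, where $s_{(k)}$ is the $k$-th smallest left endpoint. A convex combination of such mechanisms chooses index $k$ with a fixed probability $p_k$ (with $\sum_k p_k=1$, independent of the instance) and then applies the $k$-th ordered statistic mechanism. *)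

theory Defs
  imports "HOL-Analysis.Analysis"
begin

text \<open>An instance is a list of left endpoints s_1..s_n; agent i has interval [s_i, s_i+1].
  A unit covering interval C = [c, c+1] is identified with its left endpoint c.\<close>

definition overlap :: "real \<Rightarrow> real \<Rightarrow> real" where
  "overlap s c = max 0 (min (s + 1) (c + 1) - max s c)"

definition agent_cost :: "real \<Rightarrow> real \<Rightarrow> real" where
  "agent_cost s c = 1 - overlap s c"

definition SC :: "real list \<Rightarrow> real \<Rightarrow> real" where
  "SC ss c = (\<Sum>s\<leftarrow>ss. agent_cost s c)"

definition OPT :: "real list \<Rightarrow> real" where
  "OPT ss = (INF c. SC ss c)"

definition order_stat :: "real list \<Rightarrow> nat \<Rightarrow> real" where
  "order_stat ss k = sort ss ! (k - 1)"

text \<open>A convex combination of ordered statistic mechanisms: for each number of agents n,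
  probabilities p n k (k = 1..n) fixed independently of the instance.\<close>
definition is_os_mixture :: "(nat \<Rightarrow> nat \<Rightarrow> real) \<Rightarrow> bool" where
  "is_os_mixture p \<longleftrightarrow> (\<forall>n\<ge>1. (\<forall>k\<in>{1..n}. 0 \<le> p n k) \<and> (\<Sum>k=1..n. p n k) = 1)"

definition expected_SC :: "(nat \<Rightarrow> nat \<Rightarrow> real) \<Rightarrow> real list \<Rightarrow> real" where
  "expected_SC p ss = (\<Sum>k=1..length ss. p (length ss) k * SC ss (order_stat ss k))"

end

theory Submission
  imports Defs
begin

text \<open>For m \<ge> 1 take two instances of 2m agents on the integer points 0..m: in the first, m agents
  sit at 0 and one agent at each of 1..m; the second is its mirror image. At integer positions an
  agent costs 0 or 1, and for every k the k-th ordered statistic mechanism costs 3m - 1 in the two instances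
  together. Hence every mixture has expected costs summing to 3m - 1, while both optima are at
  most m, so one of the two ratios is at least 3/2 - 1/(2m).\<close>

lemma agent_cost_eq: "agent_cost s c = min 1 \<bar>s - c\<bar>"
  unfolding agent_cost_def overlap_def by (auto simp: min_def max_def abs_if)

lemma agent_cost_nonneg: "0 \<le> agent_cost s c"
  by (simp add: agent_cost_eq)

lemma agent_cost_triangle: "min 1 \<bar>s - t\<bar> \<le> agent_cost s c + agent_cost t c"
  by (auto simp: agent_cost_eq min_def abs_if)

lemma agent_cost_of_nat: "agent_cost (real x) (real d) = (if x = d then 0 else 1)"
proof (cases "x = d")
  case False
  then have "1 \<le> \<bar>real x - real d\<bar>"
    by (cases "x < d") auto
  with False show ?thesis
    by (simp add: agent_cost_eq)
qed (simp add: agent_cost_eq)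

lemma SC_Nil [simp]: "SC [] c = 0"
  and SC_Cons [simp]: "SC (s # ss) c = agent_cost s c + SC ss c"
  and SC_append [simp]: "SC (ss @ ts) c = SC ss c + SC ts c"
  by (simp_all add: SC_def)

lemma SC_nonneg: "0 \<le> SC ss c"
  by (induction ss) (simp_all add: agent_cost_nonneg)

lemma SC_of_nat: "SC (map real xs) (real d) = real (length (removeAll d xs))"
  by (induction xs) (simp_all add: agent_cost_of_nat)

lemma OPT_le_SC: "OPT ss \<le> SC ss c"
  unfolding OPT_def by (rule cINF_lower) (auto intro: bdd_belowI2[where m = 0] SC_nonneg)

lemma OPT_nonneg: "0 \<le> OPT ss"
  unfolding OPT_def by (rule cINF_greatest) (simp_all add: SC_nonneg)

lemma OPT_ge_pair:
  assumes "s \<in> set ss" "t \<in> set ss"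
  shows "min 1 \<bar>s - t\<bar> \<le> OPT ss"
proof (cases "s = t")
  case True
  then show ?thesis by (simp add: OPT_nonneg)
next
  case False
  from assms(1) obtain xs ys where ss: "ss = xs @ s # ys"
    by (meson split_list)
  with assms(2) False have t: "t \<in> set (xs @ ys)"
    by auto
  show ?thesis
    unfolding OPT_def
  proof (rule cINF_greatest)
    fix c
    have "agent_cost t c \<le> SC (xs @ ys) c"
      unfolding SC_def using t by (intro member_le_sum_list) (auto simp: agent_cost_nonneg)
    then have "agent_cost s c + agent_cost t c \<le> SC ss c"
      by (simp add: ss)
    then show "min 1 \<bar>s - t\<bar> \<le> SC ss c"
      using agent_cost_triangle[of s t c] by linarith
  qed simp
qed

lemma order_stat_sorted: "sorted ss \<Longrightarrow> order_stat ss k = ss ! (k - 1)"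
  by (simp add: order_stat_def sorted_sort_id)

definition approx_ratio :: "(nat \<Rightarrow> nat \<Rightarrow> real) \<Rightarrow> ereal" where
  "approx_ratio p = (SUP ss \<in> {ss. ss \<noteq> [] \<and> OPT ss > 0}. ereal (expected_SC p ss / OPT ss))"

lemma expected_SC_nonneg:
  assumes "is_os_mixture p" "ss \<noteq> []"
  shows "0 \<le> expected_SC p ss"
proof -
  from assms have "\<forall>k\<in>{1..length ss}. 0 \<le> p (length ss) k"
    unfolding is_os_mixture_def by (simp add: Suc_leI)
  then show ?thesis
    unfolding expected_SC_def by (auto intro!: sum_nonneg mult_nonneg_nonneg SC_nonneg)
qed

lemma expected_SC_add_eq:
  assumes "is_os_mixture p" "length A = n" "length B = n" "1 \<le> n"
    and "\<And>k. k \<in> {1..n} \<Longrightarrow> SC A (order_stat A k) + SC B (order_stat B k) = T"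
  shows "expected_SC p A + expected_SC p B = T"
proof -
  have "expected_SC p A + expected_SC p B
      = (\<Sum>k=1..n. p n k * (SC A (order_stat A k) + SC B (order_stat B k)))"
    unfolding expected_SC_def assms(2,3) by (simp add: sum.distrib distrib_left)
  also have "\<dots> = (\<Sum>k=1..n. p n k) * T"
    by (simp add: assms(5) sum_distrib_right)
  also have "\<dots> = T"
    using assms(1,4) unfolding is_os_mixture_def by simp
  finally show ?thesis .
qed

lemma approx_ratio_ge_pair:
  assumes mix: "is_os_mixture p" and "A \<noteq> []" "B \<noteq> []"
    and "0 < OPT A" "OPT A \<le> M" "0 < OPT B" "OPT B \<le> M"
    and sum: "expected_SC p A + expected_SC p B = T"
  shows "ereal (T / (2 * M)) \<le> approx_ratio p"
proof -
  let ?ratio = "\<lambda>ss. expected_SC p ss / OPT ss"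
  have ratio_le: "ereal (?ratio ss) \<le> approx_ratio p" if "ss \<in> {A, B}" for ss
    unfolding approx_ratio_def by (rule SUP_upper) (use that assms in auto)
  have "expected_SC p A / M \<le> ?ratio A" "expected_SC p B / M \<le> ?ratio B"
    using assms by (auto intro!: divide_left_mono expected_SC_nonneg)
  moreover have "T / (2 * M) = (expected_SC p A / M + expected_SC p B / M) / 2"
    by (simp add: sum[symmetric] add_divide_distrib)
  ultimately have "T / (2 * M) \<le> ?ratio A \<or> T / (2 * M) \<le> ?ratio B"
    by argo
  then obtain ss where "ss \<in> {A, B}" "T / (2 * M) \<le> ?ratio ss"
    by blast
  then show ?thesis
    using ratio_le[of ss] by (meson ereal_less_eq(3) order_trans)
qed

lemma length_removeAll_distinct:
  "distinct xs \<Longrightarrow> x \<in> set xs \<Longrightarrow> length (removeAll x xs) = length xs - 1"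
  by (simp add: distinct_remove1_removeAll[symmetric] length_remove1)

lemma removeAll_replicate:
  "removeAll x (replicate n y) = (if x = y then [] else replicate n y)"
  by (induction n) auto

definition left_stack :: "nat \<Rightarrow> nat list" where
  "left_stack m = replicate m 0 @ [1..<m + 1]"

definition right_stack :: "nat \<Rightarrow> nat list" where
  "right_stack m = [0..<m] @ replicate m m"

lemma sorted_left_stack: "sorted (left_stack m)"
  by (auto simp: left_stack_def sorted_append)

lemma sorted_right_stack: "sorted (right_stack m)"
  by (auto simp: right_stack_def sorted_append)

lemma length_stacks [simp]: "length (left_stack m) = 2 * m" "length (right_stack m) = 2 * m"
  by (simp_all add: left_stack_def right_stack_def)

lemma stacks_cost_sum:
  assumes "i < 2 * m"
  shows "length (removeAll (left_stack m ! i) (left_stack m))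
       + length (removeAll (right_stack m ! i) (right_stack m)) = 3 * m - 1"
proof (cases "i < m")
  case True
  then have "left_stack m ! i = 0" "right_stack m ! i = i"
    by (simp_all add: left_stack_def right_stack_def nth_append)
  with True show ?thesis
    by (simp add: left_stack_def right_stack_def length_removeAll_distinct removeAll_replicate del: upt_Suc)
next
  case False
  then have "left_stack m ! i = i - m + 1" "right_stack m ! i = m"
    using assms by (simp_all add: left_stack_def right_stack_def nth_append del: upt_Suc)
  with False assms show ?thesis
    by (simp add: left_stack_def right_stack_def length_removeAll_distinct removeAll_replicate del: upt_Suc)
qed

lemma approx_ratio_ge_stacks:
  assumes mix: "is_os_mixture p" and m: "1 \<le> m"
  shows "ereal (3/2 - 1 / (2 * real m)) \<le> approx_ratio p"
proof -
  define A where "A = map real (left_stack m)"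
  define B where "B = map real (right_stack m)"
  have len: "length A = 2 * m" "length B = 2 * m"
    by (simp_all add: A_def B_def)
  have "expected_SC p A + expected_SC p B = real (3 * m - 1)"
  proof (rule expected_SC_add_eq[OF mix len])
    fix k assume "k \<in> {1..2 * m}"
    then have "k - 1 < 2 * m" by auto
    then show "SC A (order_stat A k) + SC B (order_stat B k) = real (3 * m - 1)"
      using stacks_cost_sum[of "k - 1" m] sorted_left_stack[of m] sorted_right_stack[of m]
      by (simp add: A_def B_def order_stat_sorted sorted_map SC_of_nat flip: of_nat_add)
  qed (use m in simp)
  moreover have "0 \<in> set (left_stack m)" "m \<in> set (left_stack m)"
    "0 \<in> set (right_stack m)" "m \<in> set (right_stack m)"
    using m by (auto simp: left_stack_def right_stack_def)
  then have "1 \<le> OPT A" "1 \<le> OPT B"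
    using OPT_ge_pair[of 0 A "real m"] OPT_ge_pair[of 0 B "real m"] m
    by (auto simp: A_def B_def)
  moreover have "OPT A \<le> real m"
  proof -
    have "OPT A \<le> real (length (removeAll 0 (left_stack m)))"
      using OPT_le_SC[of A "real 0"] unfolding A_def SC_of_nat .
    then show ?thesis
      by (simp add: left_stack_def removeAll_replicate del: upt_Suc)
  qed
  moreover have "OPT B \<le> real m"
  proof -
    have "OPT B \<le> real (length (removeAll m (right_stack m)))"
      using OPT_le_SC[of B "real m"] unfolding B_def SC_of_nat .
    then show ?thesis
      by (simp add: right_stack_def removeAll_replicate)
  qed
  ultimately have "ereal (real (3 * m - 1) / (2 * real m)) \<le> approx_ratio p"
    using m len by (intro approx_ratio_ge_pair[OF mix]) auto
  moreover have "real (3 * m - 1) / (2 * real m) = 3/2 - 1 / (2 * real m)"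
    using m by (simp add: of_nat_diff field_simps)
  ultimately show ?thesis by simp
qed

theorem theorem6:
  fixes p :: "nat \<Rightarrow> nat \<Rightarrow> real"
  assumes "is_os_mixture p"
  shows "ereal (3/2) \<le> (SUP ss \<in> {ss. ss \<noteq> [] \<and> OPT ss > 0}. ereal (expected_SC p ss / OPT ss))"
  unfolding approx_ratio_def[symmetric]
proof (rule ereal_le_epsilon2)
  fix e :: real
  assume "0 < e"
  then obtain m :: nat where "0 < m" "inverse (real m) < e"
    using ex_inverse_of_nat_less by blast
  then have m: "1 \<le> m" "1 / (2 * real m) < e"
    by (auto simp: field_simps)
  then have "ereal (3/2) \<le> ereal (3/2 - 1 / (2 * real m)) + ereal e"
    by simp
  also have "\<dots> \<le> approx_ratio p + ereal e"
    by (intro add_right_mono approx_ratio_ge_stacks[OF assms m(1)])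
  finally show "ereal (3/2) \<le> approx_ratio p + ereal e" .
qed

end
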